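(* Let $k$ and $s$ be positive integers and suppose that $K_{k+1,s+1}$ cannot be $k$-page embedded. Let $n$ be a positive integer and $q:=n\bmod s$. Then \[ \nu_k(K_{k+1,n}) \ge q\binom{\frac{n-q}{s}+1}{2} + (s-q)\binom{\frac{n-q}{s}}{2}. \]
   Context: A book with $k$ pages consists of a line (the spine) and $k$ half-planes (the pages) whose common boundary is the spine. A $k$-page drawing of a graph places all vertices on the spine and draws each edge inside a single page; a $k$-page embedding is a $k$-page drawing without crossings. $\nu_k(G)$ is the minimum number of crossings over all $k$-page drawings of $G$. Convention: $\binom{a}{b}=0$ whenever $a<b$. *)

theory Defs
  imports Main
begin

text \<open>A graph is given by a finite vertex set V and a set E of edges, each a
two-element subset of V. A k-page drawing places the vertices on the spine
(an injective position function into the naturals, i.e. a linear order on V)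
and assigns every edge to one of the pages 0..k-1.\<close>

definition book_drawing :: "nat \<Rightarrow> 'v set \<Rightarrow> 'v set set \<Rightarrow> ('v \<Rightarrow> nat) \<Rightarrow> ('v set \<Rightarrow> nat) \<Rightarrow> bool" where
  "book_drawing k V E pos page \<longleftrightarrow> inj_on pos V \<and> (\<forall>e\<in>E. page e < k)"

text \<open>Edge e = {a,b} and edge f = {c,d} interleave along the spine with
pos a < pos c < pos b < pos d (each crossing pair is counted once, with the
edge having the leftmost endpoint first).\<close>

definition interleave :: "('v \<Rightarrow> nat) \<Rightarrow> 'v set \<Rightarrow> 'v set \<Rightarrow> bool" where
  "interleave pos e f \<longleftrightarrow> (\<exists>a b c d. e = {a, b} \<and> f = {c, d} \<and>
      pos a < pos c \<and> pos c < pos b \<and> pos b < pos d)"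

definition book_crossings :: "'v set set \<Rightarrow> ('v \<Rightarrow> nat) \<Rightarrow> ('v set \<Rightarrow> nat) \<Rightarrow> nat" where
  "book_crossings E pos page =
     card {(e, f). e \<in> E \<and> f \<in> E \<and> page e = page f \<and> interleave pos e f}"

definition book_crossing_number :: "nat \<Rightarrow> 'v set \<Rightarrow> 'v set set \<Rightarrow> nat" where
  "book_crossing_number k V E =
     Inf {book_crossings E pos page | pos page. book_drawing k V E pos page}"

definition book_embeddable :: "nat \<Rightarrow> 'v set \<Rightarrow> 'v set set \<Rightarrow> bool" where
  "book_embeddable k V E \<longleftrightarrow>
     (\<exists>pos page. book_drawing k V E pos page \<and> book_crossings E pos page = 0)"

definition KV :: "nat \<Rightarrow> nat \<Rightarrow> (nat + nat) set" where
  "KV m n = Inl ` {..<m} \<union> Inr ` {..<n}"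

definition KE :: "nat \<Rightarrow> nat \<Rightarrow> (nat + nat) set set" where
  "KE m n = {{Inl i, Inr j} | i j. i < m \<and> j < n}"

end

theory Submission
  imports Defs
begin

text \<open>Join two vertices x, y on the n-vertex side of a k-page drawing of K_{k+1,n} whenever
  an edge at x crosses an edge at y in the same page. Any s+1 of these vertices, together with
  the k+1 vertices of the other side, induce a drawing of K_{k+1,s+1}, which must have a
  crossing; so this graph has no independent set of size s+1. By Turan's theorem (in
  complementary form) it has at least as many edges as s disjoint balanced cliques on n
  vertices, and each of its edges is witnessed by a distinct crossing.\<close>

text \<open>The number of edges of s disjoint cliques of balanced sizes covering n vertices,
  i.e. of the complement of the Tur\<acute>an graph T(n,s).\<close>

definition turan_number :: "nat \<Rightarrow> nat \<Rightarrow> nat" where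
  "turan_number s n = (n mod s) * ((n div s + 1) choose 2) + (s - n mod s) * ((n div s) choose 2)"

lemma Suc_choose_two: "Suc d choose 2 = d + (d choose 2)"
  by (simp add: numeral_2_eq_2)

lemma turan_number_less: "n < s \<Longrightarrow> turan_number s n = 0"
  by (simp add: turan_number_def)

lemma turan_number_add_self:
  assumes "s > 0"
  shows "turan_number s (m + s) = turan_number s m + m"
proof -
  define q d where "q = m mod s" and "d = m div s"
  have qs: "q \<le> s" unfolding q_def using assms by (simp add: less_imp_le)
  have m: "m = s * d + q" unfolding q_def d_def by simp
  have shift: "(m + s) mod s = q" "(m + s) div s = Suc d"
    using assms unfolding q_def d_def by (simp_all add: div_add_self2)
  have "turan_number s (m + s) = q * (Suc (Suc d) choose 2) + (s - q) * (Suc d choose 2)"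
    unfolding turan_number_def shift by simp
  also have "\<dots> = (q * (Suc d choose 2) + (s - q) * (d choose 2)) + (q * (d + 1) + (s - q) * d)"
    by (simp add: Suc_choose_two algebra_simps)
  also have "q * (d + 1) + (s - q) * d = m"
    using qs unfolding m by (simp add: algebra_simps diff_mult_distrib)
  finally show ?thesis unfolding turan_number_def q_def d_def by simp
qed

lemma turan_number_Suc_mono:
  assumes "s > 0"
  shows "turan_number s n \<le> turan_number s (Suc n)"
proof (cases "Suc (n mod s) < s")
  case True
  then have "Suc n mod s = Suc (n mod s)" "Suc n div s = n div s"
    by (simp_all add: mod_Suc div_Suc)
  with True show ?thesis
    unfolding turan_number_def by (simp add: Suc_choose_two algebra_simps diff_mult_distrib)
next
  case False
  then have last: "n mod s = s - 1"
    using assms by (metis Suc_leI diff_Suc_1 le_neq_implies_less mod_less_divisor)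
  then have wrap: "Suc n mod s = 0" "Suc n div s = Suc (n div s)"
    using assms by (simp_all add: mod_Suc div_Suc)
  have "turan_number s n = (s - 1) * (Suc (n div s) choose 2) + (n div s choose 2)"
    using assms unfolding turan_number_def last by simp
  also have "\<dots> \<le> (s - 1) * (Suc (n div s) choose 2) + (Suc (n div s) choose 2)"
    by (simp add: Suc_choose_two)
  also have "\<dots> = turan_number s (Suc n)"
    using assms unfolding turan_number_def wrap by (cases s) simp_all
  finally show ?thesis .
qed

lemma turan_number_mono:
  assumes "s > 0" "m \<le> n"
  shows "turan_number s m \<le> turan_number s n"
  using assms(2) by (induction rule: dec_induct) (auto intro: order_trans turan_number_Suc_mono[OF assms(1)])

lemma turan_number_le_diff:
  assumes "s > 0" "1 \<le> a" "a \<le> s"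
  shows "turan_number s n \<le> turan_number s (n - a) + (n - a)"
proof (cases "n < s")
  case True
  then show ?thesis by (simp add: turan_number_less)
next
  case False
  then have "turan_number s n = turan_number s (n - s) + (n - s)"
    using turan_number_add_self[OF assms(1), of "n - s"] by simp
  also have "\<dots> \<le> turan_number s (n - a) + (n - a)"
    using turan_number_mono[OF assms(1), of "n - s" "n - a"] assms by linarith
  finally show ?thesis .
qed

definition independent_set :: "'a set set \<Rightarrow> 'a set \<Rightarrow> bool" where
  "independent_set P I \<longleftrightarrow> (\<forall>x\<in>I. \<forall>y\<in>I. x \<noteq> y \<longrightarrow> {x, y} \<notin> P)"

lemma independent_set_subset: "independent_set P I \<Longrightarrow> J \<subseteq> I \<Longrightarrow> independent_set P J"
  unfolding independent_set_def by blast

definition edges_within :: "'a set set \<Rightarrow> 'a set \<Rightarrow> 'a set set" where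
  "edges_within P V = {e\<in>P. e \<subseteq> V \<and> card e = 2}"

lemma finite_edges_within: "finite V \<Longrightarrow> finite (edges_within P V)"
  unfolding edges_within_def by (rule finite_subset[of _ "Pow V"]) auto

lemma edges_within_mono: "W \<subseteq> V \<Longrightarrow> edges_within P W \<subseteq> edges_within P V"
  unfolding edges_within_def by auto

lemma maximal_independent_set_exists:
  assumes "finite V" "V \<noteq> {}"
  obtains I where "I \<subseteq> V" "I \<noteq> {}" "independent_set P I" "\<forall>v\<in>V - I. \<exists>u\<in>I. {u, v} \<in> P"
proof -
  define F where "F = {I. I \<subseteq> V \<and> I \<noteq> {} \<and> independent_set P I}"
  obtain v where "v \<in> V" using assms(2) by blast
  then have "{v} \<in> F" unfolding F_def independent_set_def by auto
  moreover have "finite F" unfolding F_def using assms(1) by (simp add: finite_subset)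
  ultimately obtain I where I: "I \<in> F" and max: "\<forall>J\<in>F. I \<subseteq> J \<longrightarrow> J = I"
    using finite_has_maximal[of F] by auto
  have "\<exists>u\<in>I. {u, v} \<in> P" if v: "v \<in> V - I" for v
  proof (rule ccontr)
    assume "\<not> (\<exists>u\<in>I. {u, v} \<in> P)"
    then have "independent_set P (insert v I)"
      using I unfolding F_def independent_set_def by (auto simp: insert_commute)
    then have "insert v I \<in> F" using I v unfolding F_def by auto
    then have "insert v I = I" using max by blast
    with v show False by blast
  qed
  with I that show thesis unfolding F_def by blast
qed

text \<open>Charging each vertex outside a dominating set I to one edge joining it to I.\<close>

lemma card_edges_within_dominated:
  assumes "finite V" "I \<subseteq> V" "\<forall>v\<in>V - I. \<exists>u\<in>I. {u, v} \<in> P"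
  shows "card (edges_within P (V - I)) + card (V - I) \<le> card (edges_within P V)"
proof -
  obtain nb where nb: "\<forall>v\<in>V - I. nb v \<in> I \<and> {nb v, v} \<in> P"
    using assms(3) by metis
  have inj: "inj_on (\<lambda>v. {nb v, v}) (V - I)"
  proof (rule inj_onI)
    fix v w assume v: "v \<in> V - I" and w: "w \<in> V - I" and eq: "{nb v, v} = {nb w, w}"
    have "v \<noteq> nb w" using v w nb by auto
    then show "v = w" using eq by (auto simp: doubleton_eq_iff)
  qed
  have "{nb v, v} \<in> edges_within P V - edges_within P (V - I)" if "v \<in> V - I" for v
  proof -
    have "nb v \<in> I" "{nb v, v} \<in> P" using nb that by auto
    moreover have "card {nb v, v} = 2"
      using \<open>nb v \<in> I\<close> that by (metis Diff_iff card_2_iff)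
    moreover have "{nb v, v} \<subseteq> V" using \<open>nb v \<in> I\<close> that assms(2) by auto
    ultimately show ?thesis unfolding edges_within_def by blast
  qed
  then have "(\<lambda>v. {nb v, v}) ` (V - I) \<subseteq> edges_within P V - edges_within P (V - I)"
    by blast
  then have "card (V - I) \<le> card (edges_within P V - edges_within P (V - I))"
    using card_inj_on_le[OF inj] finite_Diff[OF finite_edges_within[OF assms(1)]] by blast
  also have "\<dots> = card (edges_within P V) - card (edges_within P (V - I))"
    by (simp add: card_Diff_subset edges_within_mono finite_edges_within assms(1))
  finally show ?thesis
    using card_mono[OF finite_edges_within[OF assms(1)] edges_within_mono[of "V - I" V P]] by auto
qed

theorem turan_number_le_card_edges_within:
  assumes "s > 0" "finite V"
    and "\<forall>S\<subseteq>V. card S = s + 1 \<longrightarrow> \<not> independent_set P S"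
  shows "turan_number s (card V) \<le> card (edges_within P V)"
  using assms(2,3)
proof (induction "card V" arbitrary: V rule: less_induct)
  case less
  show ?case
  proof (cases "V = {}")
    case True
    then show ?thesis by (simp add: turan_number_def numeral_2_eq_2)
  next
    case False
    then obtain I where I: "I \<subseteq> V" "I \<noteq> {}" "independent_set P I"
      and dom: "\<forall>v\<in>V - I. \<exists>u\<in>I. {u, v} \<in> P"
      using maximal_independent_set_exists[OF less.prems(1)] by blast
    have finI: "finite I" using I(1) less.prems(1) finite_subset by blast
    have small: "card I \<le> s"
    proof (rule ccontr)
      assume "\<not> card I \<le> s"
      then obtain S where "S \<subseteq> I" "card S = s + 1"
        using obtain_subset_with_card_n[of "s + 1" I] by (metis not_less_eq_eq Suc_eq_plus1)
      moreover have "independent_set P S" using I(3) \<open>S \<subseteq> I\<close> by (rule independent_set_subset)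
      ultimately show False using I(1) less.prems(2) by blast
    qed
    have nonempty: "1 \<le> card I" using I(2) finI by (simp add: Suc_leI card_gt_0_iff)
    have cW: "card (V - I) = card V - card I"
      using I(1) finI by (simp add: card_Diff_subset)
    have "card V - card I < card V"
      using nonempty card_mono[OF less.prems(1) I(1)] by linarith
    then have IH: "turan_number s (card (V - I)) \<le> card (edges_within P (V - I))"
      using less.hyps[of "V - I"] less.prems cW by auto
    have "turan_number s (card V) \<le> turan_number s (card (V - I)) + card (V - I)"
      using turan_number_le_diff[OF assms(1) nonempty small, of "card V"] cW by simp
    also have "\<dots> \<le> card (edges_within P (V - I)) + card (V - I)"
      using IH by simp
    also have "\<dots> \<le> card (edges_within P V)"
      by (rule card_edges_within_dominated[OF less.prems(1) I(1) dom])
    finally show ?thesis .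
  qed
qed

lemma interleaveE:
  assumes "interleave pos e f"
  obtains a b c d where "e = {a, b}" "f = {c, d}"
    "pos a < pos c" "pos c < pos b" "pos b < pos d"
  using assms unfolding interleave_def by blast

lemma interleave_disjoint: "interleave pos e f \<Longrightarrow> e \<inter> f = {}"
  by (erule interleaveE) auto

lemma interleave_comp_image: "interleave (pos \<circ> \<phi>) e f \<Longrightarrow> interleave pos (\<phi> ` e) (\<phi> ` f)"
  by (erule interleaveE) (auto simp: interleave_def)

definition crossing_pairs :: "'v set set \<Rightarrow> ('v \<Rightarrow> nat) \<Rightarrow> ('v set \<Rightarrow> nat) \<Rightarrow> ('v set \<times> 'v set) set" where
  "crossing_pairs E pos page = {(e, f). e \<in> E \<and> f \<in> E \<and> page e = page f \<and> interleave pos e f}"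

lemma book_crossings_eq_card: "book_crossings E pos page = card (crossing_pairs E pos page)"
  unfolding book_crossings_def crossing_pairs_def ..

lemma finite_crossing_pairs: "finite E \<Longrightarrow> finite (crossing_pairs E pos page)"
  unfolding crossing_pairs_def by (rule finite_subset[of _ "E \<times> E"]) auto

lemma book_drawing_comp:
  assumes "book_drawing k V E pos page"
    and "inj_on \<phi> V'" "\<phi> ` V' \<subseteq> V" "\<forall>e\<in>E'. \<phi> ` e \<in> E"
  shows "book_drawing k V' E' (pos \<circ> \<phi>) (page \<circ> image \<phi>)"
  using assms comp_inj_on[OF assms(2) inj_on_subset[of pos V]]
  unfolding book_drawing_def by auto

lemma book_drawing_exists:
  assumes "k > 0" "finite V"
  obtains pos page where "book_drawing k V E pos page"
proof -
  obtain pos :: "'a \<Rightarrow> nat" where "inj_on pos V"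
    using finite_imp_inj_to_nat_seg[OF assms(2)] by blast
  with assms(1) show thesis
    using that[of pos "\<lambda>_. 0"] unfolding book_drawing_def by simp
qed

lemma le_book_crossing_number:
  assumes "k > 0" "finite V"
    and "\<And>pos page. book_drawing k V E pos page \<Longrightarrow> b \<le> book_crossings E pos page"
  shows "b \<le> book_crossing_number k V E"
proof -
  obtain pos page where "book_drawing k V E pos page"
    using book_drawing_exists[OF assms(1,2)] .
  then show ?thesis
    unfolding book_crossing_number_def using assms(3) by (intro cInf_greatest) auto
qed

lemma finite_KV: "finite (KV m n)"
  unfolding KV_def by simp

lemma finite_KE: "finite (KE m n)"
proof -
  have "KE m n = (\<lambda>(i, j). {Inl i, Inr j}) ` ({..<m} \<times> {..<n})"
    unfolding KE_def by auto
  then show ?thesis by simp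
qed

lemma map_sum_image_KE:
  assumes "e \<in> KE m n'" "h ` {..<n'} \<subseteq> {..<n}"
  shows "map_sum id h ` e \<in> KE m n"
proof -
  obtain i t where it: "e = {Inl i, Inr t}" "i < m" "t < n'"
    using assms(1) unfolding KE_def by blast
  then have "h t < n" using assms(2) by blast
  moreover have "map_sum id h ` e = {Inl i, Inr (h t)}" unfolding it(1) by simp
  ultimately show ?thesis using it(2) unfolding KE_def by blast
qed

lemma book_drawing_restrict_KE:
  assumes "book_drawing k (KV m n) (KE m n) pos page"
    and "inj_on h {..<n'}" "h ` {..<n'} \<subseteq> {..<n}"
  shows "book_drawing k (KV m n') (KE m n') (pos \<circ> map_sum id h) (page \<circ> image (map_sum id h))"
proof (rule book_drawing_comp[OF assms(1)])
  show "inj_on (map_sum id h) (KV m n')"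
  proof (rule inj_onI)
    fix u v assume "u \<in> KV m n'" "v \<in> KV m n'" "map_sum id h u = map_sum id h v"
    then show "u = v" using assms(2) unfolding KV_def by (auto dest: inj_onD)
  qed
  show "map_sum id h ` KV m n' \<subseteq> KV m n"
    using assms(3) unfolding KV_def by auto
  show "\<forall>e\<in>KE m n'. map_sum id h ` e \<in> KE m n"
    using map_sum_image_KE[OF _ assms(3)] by blast
qed

text \<open>Every (s+1)-set S of vertices on the large side spans a copy of K_{k+1,s+1} whose
  induced drawing must cross; the crossing edges end at two distinct vertices of S.\<close>

lemma crossing_at_two_vertices_of_subset:
  assumes no_embedding: "\<not> book_embeddable k (KV (k + 1) (s + 1)) (KE (k + 1) (s + 1))"
    and drawing: "book_drawing k (KV (k + 1) n) (KE (k + 1) n) pos page"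
    and S: "S \<subseteq> {..<n}" "card S = s + 1"
  obtains i i' x y where "x \<in> S" "y \<in> S" "x \<noteq> y"
    "({Inl i, Inr x}, {Inl i', Inr y}) \<in> crossing_pairs (KE (k + 1) n) pos page"
proof -
  have "finite S" using S(1) finite_subset by blast
  then obtain h where "bij_betw h {0..<card S} S"
    using ex_bij_betw_nat_finite by blast
  then have inj_h: "inj_on h {..<s + 1}" and h_img: "h ` {..<s + 1} = S"
    unfolding S(2) atLeast0LessThan bij_betw_def by auto
  define \<phi> :: "nat + nat \<Rightarrow> nat + nat" where "\<phi> = map_sum id h"
  have "book_drawing k (KV (k + 1) (s + 1)) (KE (k + 1) (s + 1)) (pos \<circ> \<phi>) (page \<circ> image \<phi>)"
    unfolding \<phi>_def using drawing inj_h h_img S(1) by (intro book_drawing_restrict_KE) auto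
  then have "crossing_pairs (KE (k + 1) (s + 1)) (pos \<circ> \<phi>) (page \<circ> image \<phi>) \<noteq> {}"
    using no_embedding unfolding book_embeddable_def book_crossings_eq_card by fastforce
  then obtain e f where ef: "e \<in> KE (k + 1) (s + 1)" "f \<in> KE (k + 1) (s + 1)"
      "page (\<phi> ` e) = page (\<phi> ` f)" "interleave (pos \<circ> \<phi>) e f"
    unfolding crossing_pairs_def by auto
  obtain i t where e: "e = {Inl i, Inr t}" "t < s + 1" using ef(1) unfolding KE_def by auto
  obtain i' t' where f: "f = {Inl i', Inr t'}" "t' < s + 1" using ef(2) unfolding KE_def by auto
  have "t \<noteq> t'" using interleave_disjoint[OF ef(4)] e f by auto
  then have "h t \<noteq> h t'" using inj_h e(2) f(2) by (auto dest: inj_onD)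
  have "\<phi> ` e \<in> KE (k + 1) n" "\<phi> ` f \<in> KE (k + 1) n"
    unfolding \<phi>_def using ef(1,2) h_img S(1) by (auto intro: map_sum_image_KE)
  moreover have "\<phi> ` e = {Inl i, Inr (h t)}" "\<phi> ` f = {Inl i', Inr (h t')}"
    unfolding \<phi>_def e(1) f(1) by simp_all
  ultimately have "({Inl i, Inr (h t)}, {Inl i', Inr (h t')}) \<in> crossing_pairs (KE (k + 1) n) pos page"
    using ef(3) interleave_comp_image[OF ef(4)] unfolding crossing_pairs_def by simp
  moreover have "h t \<in> S" "h t' \<in> S" using h_img e(2) f(2) by auto
  ultimately show thesis using that \<open>h t \<noteq> h t'\<close> by blast
qed

lemma turan_number_le_book_crossings:
  assumes "s > 0"
    and no_embedding: "\<not> book_embeddable k (KV (k + 1) (s + 1)) (KE (k + 1) (s + 1))"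
    and drawing: "book_drawing k (KV (k + 1) n) (KE (k + 1) n) pos page"
  shows "turan_number s n \<le> book_crossings (KE (k + 1) n) pos page"
proof -
  define C where "C = crossing_pairs (KE (k + 1) n) pos page"
  define P where "P = (\<lambda>(e, f). Inr -` e \<union> Inr -` f) ` C"
  have no_independent: "\<not> independent_set P S" if S: "S \<subseteq> {..<n}" "card S = s + 1" for S
  proof -
    obtain i i' x y where xy: "x \<in> S" "y \<in> S" "x \<noteq> y"
      and cross: "({Inl i, Inr x}, {Inl i', Inr y}) \<in> C"
      using crossing_at_two_vertices_of_subset[OF no_embedding drawing S] unfolding C_def .
    have "{x, y} = (\<lambda>(e, f). Inr -` e \<union> Inr -` f) ({Inl i, Inr x}, {Inl i', Inr y})"
      by auto
    then have "{x, y} \<in> P"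
      unfolding P_def using cross by (rule image_eqI)
    with xy show ?thesis unfolding independent_set_def by blast
  qed
  have finite_C: "finite C" unfolding C_def by (intro finite_crossing_pairs finite_KE)
  have "turan_number s n \<le> card (edges_within P {..<n})"
    using turan_number_le_card_edges_within[OF assms(1), of "{..<n}" P] no_independent by simp
  also have "\<dots> \<le> card P"
    using finite_C unfolding P_def edges_within_def by (intro card_mono) auto
  also have "\<dots> \<le> card C"
    unfolding P_def using finite_C by (rule card_image_le)
  finally show ?thesis unfolding book_crossings_eq_card C_def .
qed

theorem proposition13:
  fixes k s n :: nat
  assumes "k > 0" and "s > 0"
    and "\<not> book_embeddable k (KV (k + 1) (s + 1)) (KE (k + 1) (s + 1))"
    and "n > 0"
  shows "let q = n mod s in
    book_crossing_number k (KV (k + 1) n) (KE (k + 1) n)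
      \<ge> q * (((n - q) div s + 1) choose 2) + (s - q) * (((n - q) div s) choose 2)"
proof -
  have "turan_number s n \<le> book_crossing_number k (KV (k + 1) n) (KE (k + 1) n)"
    using turan_number_le_book_crossings[OF assms(2,3)]
    by (intro le_book_crossing_number[OF assms(1) finite_KV])
  moreover have "(n - n mod s) div s = n div s"
    by (simp add: minus_mod_eq_mult_div)
  ultimately show ?thesis unfolding turan_number_def Let_def by simp
qed

end
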